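(* Let $p$ be a prime, let $n\geq 1$ and $k\geq 1$ be integers, and let $q$ be an integer with $\gcd(q,p)=1$. Define $f:\{0,1,\dots,p^n-1\}\to\{0,1,\dots,p^n-1\}$ by $f(x)\equiv q^x \pmod{p^n}$, $0\leq f(x)<p^n$. Then the number of $k$-periodic points of $f$, i.e. the number of $x\in\{0,1,\dots,p^n-1\}$ with $f^{k}(x)=x$ (where $f^k$ is the $k$-fold iterate of $f$), is at most $(p-1)^k$. *)

theory Defs
  imports "HOL-Computational_Algebra.Primes"
begin

definition expmap :: "nat \<Rightarrow> nat \<Rightarrow> int \<Rightarrow> nat \<Rightarrow> nat" where
  "expmap p n q x = nat ((q ^ x) mod (int p ^ n))"

end

theory Submission
  imports Defs "HOL-Number_Theory.Number_Theory"
begin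

text \<open>
  Since q is a unit modulo p^n, q^x mod p^(j+1) depends only on x modulo
  \<open>totient (p^(j+1)) = p^j (p - 1)\<close>. Hence if two points agree modulo p^j and modulo
  p - 1, their images agree modulo p^(j+1). For two k-periodic points whose orbits agree
  modulo p - 1, induction on j (using periodicity to shift the orbit back by one step)
  shows that the orbits agree modulo p^n, so the points coincide. A periodic point is
  therefore determined by the residues mod p - 1 of its first k iterates, and there are
  at most (p - 1)^k such tuples.
\<close>

lemma int_power_cong_totient:
  fixes q :: int and m a b :: nat
  assumes "coprime q (int m)" and "[a = b] (mod totient m)"
  shows "[q ^ a = q ^ b] (mod int m)"
proof -
  have one_sided: "[q ^ a = q ^ b] (mod int m)"
    if "b \<le> a" "[a = b] (mod totient m)" for a b
  proof (cases "m \<le> 1")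
    case True
    then consider "m = 0" | "m = 1" by linarith
    then show ?thesis
      by cases (use that in auto)
  next
    case False
    then have euler: "[q ^ totient m = 1] (mod int m)"
      using residues.euler_theorem[of "int m" q] assms(1) by (simp add: residues_def)
    from that obtain t where "a = t * totient m + b"
      by (auto simp: cong_le_nat)
    then have "q ^ a = (q ^ totient m) ^ t * q ^ b"
      by (simp add: power_add mult.commute[of t] power_mult)
    also have "[\<dots> = 1 ^ t * q ^ b] (mod int m)"
      by (intro cong_mult cong_pow euler cong_refl)
    finally show ?thesis by simp
  qed
  show ?thesis
  proof (cases "b \<le> a")
    case True
    then show ?thesis using assms(2) by (rule one_sided)
  next
    case False
    with assms(2) have "[q ^ b = q ^ a] (mod int m)"
      by (intro one_sided) (auto simp: cong_sym_eq)
    then show ?thesis by (rule cong_sym)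
  qed
qed

lemma cong_totient_prime_power_Suc:
  fixes p j a b :: nat
  assumes "prime p" and "[a = b] (mod p ^ j)" and "[a = b] (mod p - 1)"
  shows "[a = b] (mod totient (p ^ Suc j))"
proof -
  have "lcm (p ^ j) (p - 1) = totient (p ^ Suc j)"
    using coprime_diff_one_right_nat[OF prime_gt_0_nat[OF assms(1)]]
    unfolding totient_prime_power_Suc[OF assms(1)] by (simp add: lcm_coprime)
  with assms(2,3) show ?thesis
    using cong_cong_lcm_nat by metis
qed

lemma expmap_cong:
  assumes "p > 0" and "coprime q (int p)" and "m dvd p ^ n" and "[a = b] (mod totient m)"
  shows "[expmap p n q a = expmap p n q b] (mod m)"
proof -
  have "int m dvd int p ^ n"
    using assms(3) by (metis of_nat_dvd_iff of_nat_power)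
  moreover have "coprime q (int p ^ n)"
    using assms(2) by simp
  ultimately have "coprime q (int m)"
    using coprime_divisors[OF dvd_refl] by blast
  then have "[q ^ a = q ^ b] (mod int m)"
    using int_power_cong_totient assms(4) by blast
  moreover have "[int (expmap p n q x) = q ^ x] (mod int m)" for x
  proof -
    have "int (expmap p n q x) = q ^ x mod int p ^ n"
      using assms(1) by (simp add: expmap_def)
    with \<open>int m dvd int p ^ n\<close> show ?thesis
      by (simp add: cong_def mod_mod_cancel)
  qed
  ultimately have "[int (expmap p n q a) = int (expmap p n q b)] (mod int m)"
    by (meson cong_sym cong_trans)
  then show ?thesis
    by (simp add: cong_int_iff)
qed

lemma expmap_cong_lift:
  assumes "prime p" and "coprime q (int p)" and "j < n"
    and "[a = b] (mod p ^ j)" and "[a = b] (mod p - 1)"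
  shows "[expmap p n q a = expmap p n q b] (mod p ^ Suc j)"
proof (rule expmap_cong[OF prime_gt_0_nat[OF assms(1)] assms(2)])
  show "p ^ Suc j dvd p ^ n"
    using \<open>j < n\<close> by (intro le_imp_power_dvd) simp
  show "[a = b] (mod totient (p ^ Suc j))"
    using cong_totient_prime_power_Suc[OF assms(1,4,5)] .
qed

lemma cong_power_if_periodic_orbits_cong:
  fixes f :: "nat \<Rightarrow> nat"
  assumes lift: "\<And>a b j. j < n \<Longrightarrow> [a = b] (mod m ^ j) \<Longrightarrow> [a = b] (mod d) \<Longrightarrow>
      [f a = f b] (mod m ^ Suc j)"
    and "k > 0" and "(f ^^ k) x = x" and "(f ^^ k) y = y"
    and orbits_cong: "\<And>i. i < k \<Longrightarrow> [(f ^^ i) x = (f ^^ i) y] (mod d)"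
  shows "[x = y] (mod m ^ n)"
proof -
  have cong_d: "[(f ^^ i) x = (f ^^ i) y] (mod d)" for i
    using orbits_cong[of "i mod k"] \<open>k > 0\<close> funpow_mod_eq[OF assms(3)] funpow_mod_eq[OF assms(4)]
    by simp
  have "[(f ^^ i) x = (f ^^ i) y] (mod m ^ j)" if "j \<le> n" for i j
    using that
  proof (induction j arbitrary: i)
    case 0
    then show ?case by simp
  next
    case (Suc j)
    \<comment> \<open>\<open>i + k - 1\<close> is a predecessor of i along the cycle\<close>
    have "[(f ^^ Suc (i + k - 1)) x = (f ^^ Suc (i + k - 1)) y] (mod m ^ Suc j)"
      using lift[OF _ Suc.IH cong_d] Suc.prems by simp
    moreover have "(f ^^ Suc (i + k - 1)) z = (f ^^ i) z" if "(f ^^ k) z = z" for z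
      using \<open>k > 0\<close> that by (simp add: funpow_add)
    ultimately show ?case
      using assms(3,4) by simp
  qed
  from this[of n 0] show ?thesis
    by simp
qed

lemma card_le_power_if_inj_residues:
  fixes g :: "nat \<Rightarrow> 'a \<Rightarrow> nat"
  assumes "d > 0"
    and inj: "\<And>x y. x \<in> S \<Longrightarrow> y \<in> S \<Longrightarrow> (\<And>i. i < k \<Longrightarrow> g i x mod d = g i y mod d) \<Longrightarrow> x = y"
  shows "card S \<le> d ^ k"
proof -
  define residues where "residues x = restrict (\<lambda>i. g i x mod d) {..<k}" for x
  have "inj_on residues S"
    by (rule inj_onI, rule inj) (simp_all add: residues_def, metis lessThan_iff restrict_apply')
  moreover have "residues ` S \<subseteq> PiE {..<k} (\<lambda>_. {..<d})"
    using \<open>d > 0\<close> by (auto simp: residues_def PiE_def extensional_def)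
  ultimately have "card S \<le> card (PiE {..<k} (\<lambda>_. {..<d}))"
    by (intro card_inj_on_le) (auto simp: finite_PiE)
  then show ?thesis
    by (simp add: card_PiE)
qed

theorem corollary2:
  fixes p n k :: nat and q :: int
  assumes "prime p" and "n \<ge> 1" and "k \<ge> 1" and "gcd q (int p) = 1"
  shows "card {x \<in> {0..<p ^ n}. (expmap p n q ^^ k) x = x} \<le> (p - 1) ^ k"
proof -
  let ?f = "expmap p n q"
  have p_pos: "p - 1 > 0"
    using prime_ge_2_nat[OF assms(1)] by simp
  have "coprime q (int p)"
    using assms(4) by (simp add: coprime_iff_gcd_eq_1)
  note lift = expmap_cong_lift[OF assms(1) this]
  show ?thesis
  proof (rule card_le_power_if_inj_residues[OF p_pos])
    fix x y
    assume x: "x \<in> {x \<in> {0..<p ^ n}. (?f ^^ k) x = x}"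
      and y: "y \<in> {x \<in> {0..<p ^ n}. (?f ^^ k) x = x}"
      and residues: "\<And>i. i < k \<Longrightarrow> (?f ^^ i) x mod (p - 1) = (?f ^^ i) y mod (p - 1)"
    have "[x = y] (mod p ^ n)"
    proof (rule cong_power_if_periodic_orbits_cong[OF lift])
      show "k > 0" "(?f ^^ k) x = x" "(?f ^^ k) y = y"
        using assms(3) x y by auto
      show "[(?f ^^ i) x = (?f ^^ i) y] (mod p - 1)" if "i < k" for i
        using residues[OF that] by (simp add: cong_def)
    qed
    then show "x = y"
      using x y by (auto intro: cong_less_modulus_unique_nat)
  qed
qed

end
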